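(* Let $m\ge 1$. If $m=2t$ is even, then $\alpha_{m+1,k}=2(2m+1-k)\alpha_{m,k}-(4k-1)\beta_{m,k-1}$ for $1\le k\le t$; $\beta_{m+1,k}=(1+4k)\alpha_{m,k}+(4m+2k+3)\beta_{m,k}$ for $0\le k\le t-1$; $\alpha_{m+1,0}=2(2m+1)\alpha_{m,0}$ and $\beta_{m+1,t}=(1+4t)\alpha_{m,t}$. If $m=2t+1$ is odd, then $\alpha_{m+1,k}=2(2m+1-k)\alpha_{m,k}-(4k-1)\beta_{m,k-1}$ for $1\le k\le t$; $\alpha_{m+1,0}=2(2m+1)\alpha_{m,0}$ and $\alpha_{m+1,t+1}=-(3+4t)\beta_{m,t}$; $\beta_{m+1,k}=(1+4k)\alpha_{m,k}+(4m+2k+3)\beta_{m,k}$ for $0\le k\le t$.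
   Context: $P_m(x)=\sum_{i=0}^m d_i(m)x^i$ with $d_i(m)=2^{-2m}\sum_{k=i}^m 2^k\binom{2m-2k}{m-k}\binom{m+k}{k}\binom{k}{i}$; $Q_m(x)=2^m m!\,x^mP_m(1/x)$ (degree $m$). $(a_m(x),b_m(x))$ is the symmetric decomposition of $Q_m$: $a_m(x)=\frac{Q_m(x)-x^{m+1}Q_m(1/x)}{1-x}$, $b_m(x)=\frac{x^mQ_m(1/x)-Q_m(x)}{1-x}$. The numbers $\alpha_{m,k},\beta_{m,k}$ are the unique coefficients with $a_m(x)=\sum_{k=0}^{\lfloor m/2\rfloor}\alpha_{m,k}x^k(1+x)^{m-2k}$ and $b_m(x)=\sum_{k=0}^{\lfloor (m-1)/2\rfloor}\beta_{m,k}x^k(1+x)^{m-1-2k}$. *)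

theory Defs
  imports "HOL-Computational_Algebra.Polynomial"
begin

definition d :: "nat \<Rightarrow> nat \<Rightarrow> real" where
  "d i m = (1 / 2 ^ (2*m)) * (\<Sum>k=i..m. 2 ^ k * real ((2*m - 2*k) choose (m - k))
              * real ((m + k) choose k) * real (k choose i))"

definition P :: "nat \<Rightarrow> real poly" where
  "P m = (\<Sum>i\<le>m. monom (d i m) i)"

text \<open>revp n p is the polynomial x^n p(1/x), for p of degree at most n.\<close>
definition revp :: "nat \<Rightarrow> real poly \<Rightarrow> real poly" where
  "revp n p = (\<Sum>i\<le>n. monom (coeff p i) (n - i))"

definition Q :: "nat \<Rightarrow> real poly" where
  "Q m = smult (2 ^ m * fact m) (revp m (P m))"

text \<open>Symmetric decomposition; [:1,-1:] is the polynomial 1 - x (division is exact).\<close>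
definition a :: "nat \<Rightarrow> real poly" where
  "a m = (Q m - revp (m + 1) (Q m)) div [:1, -1:]"

definition b :: "nat \<Rightarrow> real poly" where
  "b m = (revp m (Q m) - Q m) div [:1, -1:]"

definition alpha :: "nat \<Rightarrow> nat \<Rightarrow> real" where
  "alpha m = (THE f. (\<forall>k. m div 2 < k \<longrightarrow> f k = 0) \<and>
      a m = (\<Sum>k\<le>m div 2. smult (f k) ([:0, 1:] ^ k * [:1, 1:] ^ (m - 2*k))))"

definition beta :: "nat \<Rightarrow> nat \<Rightarrow> real" where
  "beta m = (THE f. (\<forall>k. (m - 1) div 2 < k \<longrightarrow> f k = 0) \<and>
      b m = (\<Sum>k\<le>(m - 1) div 2. smult (f k) ([:0, 1:] ^ k * [:1, 1:] ^ (m - 1 - 2*k))))"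

end

theory Submission
  imports Defs
begin

text \<open>
Expanding d_i(m) and exchanging the two sums gives the closed form
Q_m(x) = \<Sum>_k c(m,k) x^(m-k) (1+x)^k with c(j+k,k) = (2j)! (j+2k)! / (j!^2 2^j k!).
These coefficients satisfy a two-term recurrence which says exactly that Q_(m+1) = L_m Q_m
for the differential operator L_m p = (2m+1)(2+3x) p - 2x(1+x) p'.

If Q_m = \<Sum> f_k x^k (1+x)^(m-2k) + x \<Sum> g_k x^k (1+x)^(m-1-2k), both sums are palindromic,
of degrees m and m-1, so they are a_m and b_m; as the polynomials x^k (1+x)^(n-2k) are linearly
independent, f and g are then alpha_m and beta_m. Now L_m maps x^k (1+x)^(m-2k) and
x^(k+1) (1+x)^(m-1-2k) to explicit combinations of the basis polynomials of degree m+1, and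
reading off coefficients gives the recurrences; the induction starts from Q_1 = 2 + 3x.
\<close>

lemma sum_atMost_atLeastAtMost_swap:
  fixes g :: "nat \<Rightarrow> nat \<Rightarrow> 'a::comm_monoid_add"
  shows "(\<Sum>i\<le>m. \<Sum>k=i..m. g i k) = (\<Sum>k\<le>m. \<Sum>i\<le>k. g i k)"
proof -
  have "(\<Sum>i\<le>m. \<Sum>k\<in>{k\<in>{..m}. i \<le> k}. g i k) = (\<Sum>k\<le>m. \<Sum>i\<in>{i\<in>{..m}. i \<le> k}. g i k)"
    by (rule sum.swap_restrict) auto
  moreover have "\<And>i. {k\<in>{..m}. i \<le> k} = {i..m}" by auto
  moreover have "\<And>k. k \<le> m \<Longrightarrow> {i\<in>{..m}. i \<le> k} = {..k}" by auto
  ultimately show ?thesis by simp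
qed

abbreviation X :: "real poly" where "X \<equiv> [:0, 1:]"
abbreviation Y :: "real poly" where "Y \<equiv> [:1, 1:]"

definition Q_coeff :: "nat \<Rightarrow> nat \<Rightarrow> real" where
  "Q_coeff m k = fact m * 2 ^ k / 2 ^ m * real ((2*m - 2*k) choose (m - k)) * real ((m + k) choose k)"

lemma poly_revp: "poly (revp n p) x = (\<Sum>i\<le>n. coeff p i * x ^ (n - i))"
  by (simp add: revp_def poly_sum poly_monom)

lemma binomial_shifted:
  fixes x :: "'a::comm_semiring_1"
  assumes "k \<le> m"
  shows "(\<Sum>i\<le>k. of_nat (k choose i) * x ^ (m - i)) = x ^ (m - k) * (1 + x) ^ k"
proof -
  have "x ^ (m - k) * (1 + x) ^ k = (\<Sum>i\<le>k. of_nat (k choose i) * (x ^ (m - k) * x ^ (k - i)))"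
    by (simp add: binomial_ring[of 1 x] sum_distrib_left algebra_simps)
  also have "\<dots> = (\<Sum>i\<le>k. of_nat (k choose i) * x ^ (m - i))"
    using assms by (intro sum.cong refl) (simp flip: power_add)
  finally show ?thesis by simp
qed

lemma Q_closed_form: "Q m = (\<Sum>k\<le>m. smult (Q_coeff m k) (X ^ (m - k) * Y ^ k))"
proof (rule poly_ext)
  fix x :: real
  define T where "T k = 2 ^ k * real ((2*m - 2*k) choose (m - k)) * real ((m + k) choose k)" for k
  have "poly (Q m) x = 2 ^ m * fact m / 2 ^ (2*m) * (\<Sum>i\<le>m. \<Sum>k=i..m. T k * real (k choose i) * x ^ (m - i))"
    by (simp add: Q_def poly_revp P_def coeff_sum coeff_monom d_def T_def
        sum_distrib_left sum_distrib_right mult_ac)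
  also have "(\<Sum>i\<le>m. \<Sum>k=i..m. T k * real (k choose i) * x ^ (m - i)) = (\<Sum>k\<le>m. T k * (x ^ (m - k) * (1 + x) ^ k))"
    by (simp add: sum_atMost_atLeastAtMost_swap binomial_shifted[symmetric] sum_distrib_left mult.assoc)
  also have "(2::real) ^ m * fact m / 2 ^ (2*m) = fact m / 2 ^ m"
    by (simp add: mult_2 power_add)
  finally show "poly (Q m) x = poly (\<Sum>k\<le>m. smult (Q_coeff m k) (X ^ (m - k) * Y ^ k)) x"
    by (simp add: poly_sum Q_coeff_def T_def sum_distrib_left mult_ac)
qed

lemma Q_coeff_fact: "Q_coeff (j + k) k = fact (2*j) * fact (j + 2*k) / (fact j ^ 2 * 2 ^ j * fact k)"
proof -
  have "2*(j + k) - 2*k = 2*j" "j + k - k = j" "j + k + k = j + 2*k" by simp_all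
  then have "Q_coeff (j + k) k = fact (j + k) * 2 ^ k / 2 ^ (j + k)
      * real ((2*j) choose j) * real ((j + 2*k) choose k)"
    unfolding Q_coeff_def by (simp only:)
  also have "real ((2*j) choose j) = fact (2*j) / (fact j * fact j)"
    using binomial_fact[of j "2*j"] by (simp add: mult_2)
  also have "real ((j + 2*k) choose k) = fact (j + 2*k) / (fact k * fact (j + k))"
    using binomial_fact[of k "j + 2*k"] by (simp add: mult_2 add_ac)
  finally show ?thesis
    by (simp add: field_simps power2_eq_square power_add)
qed

lemma Q_coeff_Suc_left:
  "(real j + 1) * Q_coeff (Suc j + k) k = (2 * real j + 1) * (real j + 2 * real k + 1) * Q_coeff (j + k) k"
proof -
  have "fact (2 * Suc j) = (2 * real j + 2) * (2 * real j + 1) * (fact (2*j) :: real)"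
    by (simp add: fact_Suc algebra_simps)
  moreover have "fact (Suc j + 2*k) = (real j + 2 * real k + 1) * (fact (j + 2*k) :: real)"
    by (simp add: fact_Suc algebra_simps)
  moreover have "fact (Suc j) = (real j + 1) * (fact j :: real)"
    by (simp add: algebra_simps)
  moreover have "real j + 1 \<noteq> 0" by linarith
  ultimately show ?thesis
    by (simp only: Q_coeff_fact) (simp add: divide_simps power2_eq_square del: fact_Suc)
qed

lemma Q_coeff_Suc_right:
  "(real k + 1) * Q_coeff (j + Suc k) (Suc k) = (real j + 2 * real k + 1) * (real j + 2 * real k + 2) * Q_coeff (j + k) k"
proof -
  have "fact (j + 2 * Suc k) = (real j + 2 * real k + 2) * (real j + 2 * real k + 1) * (fact (j + 2*k) :: real)"
    by (simp add: fact_Suc algebra_simps)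
  moreover have "fact (Suc k) = (real k + 1) * (fact k :: real)"
    by (simp add: algebra_simps)
  moreover have "real k + 1 \<noteq> 0" by linarith
  ultimately show ?thesis
    by (simp only: Q_coeff_fact) (simp add: divide_simps del: fact_Suc)
qed

lemma Q_coeff_Suc_Suc:
  "Q_coeff (Suc j + Suc k) (Suc k) =
     2 * (real j + 2 * real k + 2) * Q_coeff (Suc j + k) k + (2 * real j + 1) * Q_coeff (j + Suc k) (Suc k)"
    (is "?T = 2 * ?v * ?L + ?u * ?R")
proof -
  let ?c = "Q_coeff (j + k) k"
  \<comment> \<open>after clearing the factor (j+1)(k+1), all three coefficients are multiples of ?c\<close>
  have diag: "(real k + 1) * ?T = ?v * (real j + 2 * real k + 3) * ?L"
    using Q_coeff_Suc_right[where j = "Suc j" and k = k] by (simp add: algebra_simps)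
  have "(real j + 1) * (real k + 1) * ?T = (real j + 1) * (?v * (real j + 2 * real k + 3) * ?L)"
    by (simp only: mult.assoc diag)
  also have "\<dots> = ?v * (real j + 2 * real k + 3) * ((2 * real j + 1) * (real j + 2 * real k + 1) * ?c)"
    unfolding Q_coeff_Suc_left[symmetric] by (simp add: algebra_simps)
  also have "\<dots> = 2 * ?v * (real k + 1) * ((2 * real j + 1) * (real j + 2 * real k + 1) * ?c)
      + ?u * (real j + 1) * ((real j + 2 * real k + 1) * ?v * ?c)"
    by (simp add: algebra_simps)
  also have "\<dots> = (real j + 1) * (real k + 1) * (2 * ?v * ?L + ?u * ?R)"
    unfolding Q_coeff_Suc_left[symmetric] Q_coeff_Suc_right[symmetric] by (simp add: algebra_simps)
  finally show ?thesis by simp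
qed

lemma Q_coeff_Suc:
  assumes "k \<le> Suc m"
  shows "Q_coeff (Suc m) k = (if k = 0 then 0 else 2 * (real m + real k) * Q_coeff m (k - 1))
                            + (if k = Suc m then 0 else (2 * real m + 1 - 2 * real k) * Q_coeff m k)"
proof (cases k)
  case 0
  then show ?thesis using Q_coeff_Suc_left[of m 0] by simp
next
  case (Suc k')
  show ?thesis
  proof (cases "k' = m")
    case True
    have "(real m + 1) * Q_coeff (Suc m) (Suc m) = (real m + 1) * (2 * (2 * real m + 1) * Q_coeff m m)"
      using Q_coeff_Suc_right[of m 0] by (simp add: algebra_simps)
    then have "Q_coeff (Suc m) (Suc m) = 2 * (2 * real m + 1) * Q_coeff m m"
      by (rule mult_left_cancel[THEN iffD1, rotated]) linarith
    then show ?thesis using Suc True by (simp add: algebra_simps)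
  next
    case False
    define j where "j = m - Suc k'"
    have "m = Suc j + k'" using False Suc assms by (simp add: j_def)
    then show ?thesis using Suc Q_coeff_Suc_Suc[of j k'] by (simp add: algebra_simps)
  qed
qed

definition L :: "nat \<Rightarrow> real poly \<Rightarrow> real poly" where
  "L m p = smult (2 * real m + 1) ([:2, 3:] * p) - smult 2 (X * Y * pderiv p)"

lemma L_add: "L m (p + q) = L m p + L m q"
  by (intro poly_ext) (simp add: L_def pderiv_add algebra_simps)

lemma L_smult: "L m (smult c p) = smult c (L m p)"
  by (intro poly_ext) (simp add: L_def pderiv_smult algebra_simps)

lemma L_sum: "L m (\<Sum>k\<in>A. f k) = (\<Sum>k\<in>A. L m (f k))"
  by (induction A rule: infinite_finite_induct) (simp_all add: L_add L_def[of m 0])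

lemma mult_pderiv_power:
  fixes p :: "'a::{comm_semiring_1,semiring_no_zero_divisors} poly"
  assumes "pderiv p = 1"
  shows "p * pderiv (p ^ n) = smult (of_nat n) (p ^ n)"
proof (cases n)
  case (Suc k)
  have "pderiv (p ^ Suc k) = smult (of_nat (Suc k)) (p ^ k)"
    by (simp only: pderiv_power_Suc assms mult_1_right)
  then show ?thesis
    by (simp only: Suc mult_smult_right power_Suc)
qed simp

lemma L_monomial:
  "L m (X ^ i * Y ^ j) = smult (2 * (2 * real m + 1 - real i)) (X ^ i * Y ^ Suc j)
                       + smult (2 * real m + 1 - 2 * real j) (X ^ Suc i * Y ^ j)"
proof -
  have "X * Y * pderiv (X ^ i * Y ^ j) = X ^ i * X * (Y * pderiv (Y ^ j)) + Y ^ j * Y * (X * pderiv (X ^ i))"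
    by (simp add: pderiv_mult algebra_simps del: mult_pCons_left mult_pCons_right)
  also have "\<dots> = smult (real j) (X ^ Suc i * Y ^ j) + smult (real i) (X ^ i * Y ^ Suc j)"
    by (simp add: mult_pderiv_power pderiv_pCons algebra_simps del: mult_pCons_left mult_pCons_right)
  finally show ?thesis
    unfolding L_def by (intro poly_ext) (simp add: algebra_simps)
qed

lemma Q_Suc: "Q (Suc m) = L m (Q m)"
proof -
  define H where "H k = X ^ (Suc m - k) * Y ^ k" for k
  define A where "A k = 2 * (real m + real (Suc k)) * Q_coeff m k" for k
  define B where "B k = (2 * real m + 1 - 2 * real k) * Q_coeff m k" for k
  have "L m (Q m) = (\<Sum>k\<le>m. smult (A k) (H (Suc k)) + smult (B k) (H k))"
    unfolding Q_closed_form[of m] L_sum L_smult L_monomial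
    by (intro sum.cong refl) (simp add: H_def A_def B_def Suc_diff_le smult_add_right algebra_simps)
  also have "\<dots> = (\<Sum>k\<le>Suc m. smult (if k = 0 then 0 else A (k - 1)) (H k))
                  + (\<Sum>k\<le>Suc m. smult (if k = Suc m then 0 else B k) (H k))"
  proof -
    have "(\<Sum>k\<le>m. smult (A k) (H (Suc k))) = (\<Sum>k\<le>Suc m. smult (if k = 0 then 0 else A (k - 1)) (H k))"
      by (subst sum.atMost_Suc_shift) simp
    moreover have "(\<Sum>k\<le>m. smult (B k) (H k)) = (\<Sum>k\<le>Suc m. smult (if k = Suc m then 0 else B k) (H k))"
      by (simp cong: sum.cong_simp)
    ultimately show ?thesis by (simp add: sum.distrib)
  qed
  also have "\<dots> = (\<Sum>k\<le>Suc m. smult (Q_coeff (Suc m) k) (H k))"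
    unfolding sum.distrib[symmetric] smult_add_left[symmetric]
    by (intro sum.cong refl) (simp add: Q_coeff_Suc A_def B_def)
  also have "\<dots> = Q (Suc m)"
    by (simp add: Q_closed_form[of "Suc m"] H_def)
  finally show ?thesis ..
qed

definition gamma_basis :: "nat \<Rightarrow> nat \<Rightarrow> real poly" where
  "gamma_basis n k = X ^ k * Y ^ (n - 2*k)"

definition gamma_poly :: "nat \<Rightarrow> (nat \<Rightarrow> real) \<Rightarrow> real poly" where
  "gamma_poly n f = (\<Sum>k\<le>n div 2. smult (f k) (gamma_basis n k))"

lemma gamma_poly_add: "gamma_poly n (\<lambda>k. f k + g k) = gamma_poly n f + gamma_poly n g"
  by (simp add: gamma_poly_def smult_add_left sum.distrib)

lemma gamma_poly_diff: "gamma_poly n (\<lambda>k. f k - g k) = gamma_poly n f - gamma_poly n g"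
  by (simp add: gamma_poly_def smult_diff_left sum_subtractf)

lemma gamma_poly_eq_sum:
  assumes "\<And>k. N < k \<Longrightarrow> f k = 0" "N \<le> n div 2"
  shows "gamma_poly n f = (\<Sum>k\<le>N. smult (f k) (gamma_basis n k))"
  unfolding gamma_poly_def using assms by (intro sum.mono_neutral_right) auto

lemma L_gamma_basis:
  assumes "2*k \<le> m"
  shows "L m (gamma_basis m k) = smult (2 * (2 * real m + 1 - real k)) (gamma_basis (Suc m) k)
                               + smult (1 + 4 * real k) (X * gamma_basis m k)"
proof -
  from assms obtain j where m: "m = 2*k + j" using le_Suc_ex by blast
  show ?thesis
    unfolding gamma_basis_def L_monomial m by (simp add: Suc_diff_le algebra_simps)
qed

lemma L_X_gamma_basis:
  assumes "2*k < m"
  shows "L m (X * gamma_basis (m - 1) k) = smult (4 * real m + 2 * real k + 3) (X * gamma_basis m k)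
                                         - smult (4 * real k + 3) (gamma_basis (Suc m) (Suc k))"
proof -
  from assms obtain j where m: "m = Suc (2*k + j)" using less_imp_Suc_add by blast
  have X_gamma_basis: "X * gamma_basis (m - 1) k = X ^ Suc k * Y ^ j"
    by (simp add: gamma_basis_def m)
  show ?thesis
    unfolding X_gamma_basis L_monomial by (intro poly_ext) (simp add: gamma_basis_def m algebra_simps)
qed

lemma L_gamma_poly:
  assumes f: "\<And>k. m div 2 < k \<Longrightarrow> f k = 0"
  shows "L m (gamma_poly m f) = gamma_poly (Suc m) (\<lambda>k. 2 * (2 * real m + 1 - real k) * f k)
                              + X * gamma_poly m (\<lambda>k. (1 + 4 * real k) * f k)"
    (is "_ = gamma_poly (Suc m) ?u + X * gamma_poly m ?v")
proof -
  have "L m (gamma_poly m f) = (\<Sum>k\<le>m div 2. smult (?u k) (gamma_basis (Suc m) k))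
                             + X * (\<Sum>k\<le>m div 2. smult (?v k) (gamma_basis m k))"
    unfolding gamma_poly_def L_sum L_smult sum_distrib_left sum.distrib[symmetric]
    by (intro sum.cong refl) (simp add: L_gamma_basis smult_add_right mult_smult_right mult.commute)
  also have "(\<Sum>k\<le>m div 2. smult (?u k) (gamma_basis (Suc m) k)) = gamma_poly (Suc m) ?u"
    using f by (intro gamma_poly_eq_sum[symmetric]) (auto simp: div_le_mono)
  finally show ?thesis by (simp only: gamma_poly_def)
qed

lemma L_X_gamma_poly:
  assumes "m \<ge> 1" and g: "\<And>k. (m - 1) div 2 < k \<Longrightarrow> g k = 0"
  shows "L m (X * gamma_poly (m - 1) g) = X * gamma_poly m (\<lambda>k. (4 * real m + 2 * real k + 3) * g k)
                                        - gamma_poly (Suc m) (\<lambda>k. if k = 0 then 0 else (4 * real k - 1) * g (k - 1))"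
    (is "_ = X * gamma_poly m ?u - gamma_poly (Suc m) ?v")
proof -
  have "L m (X * gamma_poly (m - 1) g) = X * (\<Sum>k\<le>(m - 1) div 2. smult (?u k) (gamma_basis m k))
                                       - (\<Sum>k\<le>(m - 1) div 2. smult (?v (Suc k)) (gamma_basis (Suc m) (Suc k)))"
    unfolding gamma_poly_def sum_distrib_left mult_smult_right L_sum L_smult sum_subtractf[symmetric]
  proof (intro sum.cong refl)
    fix k assume "k \<in> {..(m - 1) div 2}"
    then have "2*k < m" using assms(1) by auto
    then show "smult (g k) (L m (X * gamma_basis (m - 1) k)) =
        smult (?u k) (X * gamma_basis m k) - smult (?v (Suc k)) (gamma_basis (Suc m) (Suc k))"
      by (simp only: L_X_gamma_basis) (simp add: smult_diff_right algebra_simps)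
  qed
  also have "(\<Sum>k\<le>(m - 1) div 2. smult (?u k) (gamma_basis m k)) = gamma_poly m ?u"
    using g by (intro gamma_poly_eq_sum[symmetric]) (auto simp: div_le_mono)
  also have "(\<Sum>k\<le>(m - 1) div 2. smult (?v (Suc k)) (gamma_basis (Suc m) (Suc k))) = gamma_poly (Suc m) ?v"
  proof -
    have "Suc m div 2 = Suc ((m - 1) div 2)"
      using assms(1) by (cases m) auto
    then show ?thesis
      unfolding gamma_poly_def by (simp only: sum.atMost_Suc_shift) simp
  qed
  finally show ?thesis .
qed

definition alpha_next :: "nat \<Rightarrow> (nat \<Rightarrow> real) \<Rightarrow> (nat \<Rightarrow> real) \<Rightarrow> nat \<Rightarrow> real" where
  "alpha_next m f g k = 2 * (2 * real m + 1 - real k) * f k - (if k = 0 then 0 else (4 * real k - 1) * g (k - 1))"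

definition beta_next :: "nat \<Rightarrow> (nat \<Rightarrow> real) \<Rightarrow> (nat \<Rightarrow> real) \<Rightarrow> nat \<Rightarrow> real" where
  "beta_next m f g k = (1 + 4 * real k) * f k + (4 * real m + 2 * real k + 3) * g k"

lemma L_gamma_decomposition:
  assumes "m \<ge> 1" "\<And>k. m div 2 < k \<Longrightarrow> f k = 0" "\<And>k. (m - 1) div 2 < k \<Longrightarrow> g k = 0"
  shows "L m (gamma_poly m f + X * gamma_poly (m - 1) g) =
           gamma_poly (Suc m) (alpha_next m f g) + X * gamma_poly m (beta_next m f g)"
proof -
  have "L m (gamma_poly m f + X * gamma_poly (m - 1) g) = L m (gamma_poly m f) + L m (X * gamma_poly (m - 1) g)"
    by (rule L_add)
  also note L_gamma_poly[OF assms(2)]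
  also note L_X_gamma_poly[OF assms(1,3)]
  finally show ?thesis
    unfolding alpha_next_def[abs_def] beta_next_def[abs_def] gamma_poly_add gamma_poly_diff
    by (simp add: algebra_simps)
qed

lemma alpha_next_vanishes:
  assumes "m \<ge> 1" "\<And>k. m div 2 < k \<Longrightarrow> f k = 0" "\<And>k. (m - 1) div 2 < k \<Longrightarrow> g k = 0"
    and "Suc m div 2 < k"
  shows "alpha_next m f g k = 0"
  using assms by (simp add: alpha_next_def)

lemma beta_next_vanishes:
  assumes "\<And>k. m div 2 < k \<Longrightarrow> f k = 0" "\<And>k. (m - 1) div 2 < k \<Longrightarrow> g k = 0"
    and "m div 2 < k"
  shows "beta_next m f g k = 0"
  using assms by (simp add: beta_next_def)

lemma revp_add: "revp n (p + q) = revp n p + revp n q"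
  by (simp add: revp_def add_monom[symmetric] sum.distrib)

lemma revp_X_mult: "revp (Suc n) (X * p) = revp n p"
  unfolding revp_def by (subst sum.atMost_Suc_shift) simp

lemma revp_Suc:
  assumes "degree p \<le> n"
  shows "revp (Suc n) p = X * revp n p"
proof -
  have "coeff p (Suc n) = 0" using assms by (simp add: coeff_eq_0)
  then show ?thesis
    by (simp add: revp_def sum_distrib_left Suc_diff_le monom_Suc cong: sum.cong_simp)
qed

lemma poly_revp_nonzero:
  assumes "degree p \<le> n" "x \<noteq> 0"
  shows "poly (revp n p) x = x ^ n * poly p (1 / x)"
proof -
  have "poly p (1 / x) = poly (\<Sum>i\<le>n. monom (coeff p i) i) (1 / x)"
    using poly_as_sum_of_monoms'[OF assms(1)] by simp
  then have "x ^ n * poly p (1 / x) = (\<Sum>i\<le>n. coeff p i * (x ^ n * (1 / x) ^ i))"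
    by (simp add: poly_sum poly_monom sum_distrib_left mult_ac)
  also have "\<dots> = (\<Sum>i\<le>n. coeff p i * x ^ (n - i))"
    using assms(2) by (intro sum.cong refl) (simp add: power_one_over power_diff field_simps)
  finally show ?thesis by (simp add: poly_revp)
qed

lemma poly_eqI_nonzero:
  fixes p q :: "'a::{ring_char_0, idom} poly"
  assumes "\<And>x. x \<noteq> 0 \<Longrightarrow> poly p x = poly q x"
  shows "p = q"
proof -
  have "[:0, 1:] * p = [:0, 1:] * q"
    using assms by (intro poly_ext) auto
  then show ?thesis by simp
qed

lemma degree_gamma_poly: "degree (gamma_poly n f) \<le> n"
proof -
  have "degree (gamma_basis n k) \<le> n" if "k \<le> n div 2" for k
  proof -
    have "degree (gamma_basis n k) \<le> k + (n - 2*k)"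
      using degree_mult_le[of "X ^ k" "Y ^ (n - 2*k)"] degree_power_le[of X k] degree_power_le[of Y "n - 2*k"]
      by (simp add: gamma_basis_def)
    then show ?thesis using that by linarith
  qed
  then show ?thesis
    unfolding gamma_poly_def by (intro degree_sum_le) (auto intro: order.trans[OF degree_smult_le])
qed

lemma revp_gamma_poly: "revp n (gamma_poly n f) = gamma_poly n f"
proof (rule poly_eqI_nonzero)
  fix x :: real assume x: "x \<noteq> 0"
  have palindromic: "x ^ n * poly (gamma_basis n k) (1 / x) = poly (gamma_basis n k) x" if "2*k \<le> n" for k
  proof -
    from that obtain r where n: "n = k + k + r" using le_Suc_ex by (metis mult_2)
    have "x ^ n * poly (gamma_basis n k) (1 / x) = (x ^ k * (1 / x) ^ k) * x ^ k * (x * (1 + 1 / x)) ^ r"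
      by (simp add: gamma_basis_def n power_add power_mult_distrib mult_ac)
    also have "x ^ k * (1 / x) ^ k = 1"
      using x by (simp add: power_one_over field_simps)
    also have "x * (1 + 1 / x) = 1 + x"
      using x by (simp add: field_simps)
    finally show ?thesis
      by (simp add: gamma_basis_def n)
  qed
  have "poly (revp n (gamma_poly n f)) x = (\<Sum>k\<le>n div 2. f k * (x ^ n * poly (gamma_basis n k) (1 / x)))"
    unfolding poly_revp_nonzero[OF degree_gamma_poly x] by (simp add: gamma_poly_def poly_sum sum_distrib_left mult_ac)
  also have "\<dots> = poly (gamma_poly n f) x"
    by (simp add: palindromic gamma_poly_def poly_sum)
  finally show "poly (revp n (gamma_poly n f)) x = poly (gamma_poly n f) x" .
qed

lemma symmetric_decomposition_gamma:
  assumes "n \<ge> 1" and p: "p = gamma_poly n f + X * gamma_poly (n - 1) g"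
  shows "(p - revp (Suc n) p) div [:1, -1:] = gamma_poly n f"
    and "(revp n p - p) div [:1, -1:] = gamma_poly (n - 1) g"
proof -
  have n: "n = Suc (n - 1)" using assms(1) by simp
  have nz: "[:1, -1:] \<noteq> (0 :: real poly)" by simp
  have "degree (X * gamma_poly (n - 1) g) \<le> n"
    using degree_mult_le[of X "gamma_poly (n - 1) g"] degree_gamma_poly[of "n - 1" g] n by simp
  then have "degree p \<le> n"
    unfolding p by (intro degree_add_le degree_gamma_poly)
  have rev: "revp n p = gamma_poly n f + gamma_poly (n - 1) g"
    unfolding p revp_add revp_gamma_poly by (subst n, subst revp_X_mult) (simp add: revp_gamma_poly)
  have "p - revp (Suc n) p = [:1, -1:] * gamma_poly n f"
    unfolding revp_Suc[OF \<open>degree p \<le> n\<close>] rev by (simp add: p algebra_simps)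
  then show "(p - revp (Suc n) p) div [:1, -1:] = gamma_poly n f"
    by (simp only: nonzero_mult_div_cancel_left[OF nz])
  have "revp n p - p = [:1, -1:] * gamma_poly (n - 1) g"
    unfolding rev by (simp add: p algebra_simps)
  then show "(revp n p - p) div [:1, -1:] = gamma_poly (n - 1) g"
    by (simp only: nonzero_mult_div_cancel_left[OF nz])
qed

lemma gamma_poly_Suc_Suc:
  "gamma_poly (Suc (Suc n)) h = smult (h 0) (Y ^ Suc (Suc n)) + X * gamma_poly n (\<lambda>k. h (Suc k))"
proof -
  have "Suc (Suc n) div 2 = Suc (n div 2)" by simp
  then show ?thesis
    unfolding gamma_poly_def by (simp only: sum.atMost_Suc_shift)
      (simp add: gamma_basis_def sum_distrib_left mult_smult_right mult.assoc del: mult_pCons_left)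
qed

lemma gamma_poly_eq_0D:
  assumes "gamma_poly n h = 0" "k \<le> n div 2"
  shows "h k = 0"
  using assms
proof (induction n arbitrary: h k rule: nat_induct2)
  case 0
  then show ?case by (simp add: gamma_poly_def gamma_basis_def)
next
  case 1
  then show ?case by (simp add: gamma_poly_def gamma_basis_def)
next
  case (step n)
  have "poly (gamma_poly (Suc (Suc n)) h) 0 = h 0"
    by (simp add: gamma_poly_Suc_Suc)
  then have h0: "h 0 = 0" using step.prems(1) by simp
  then have "gamma_poly n (\<lambda>k. h (Suc k)) = 0"
    using step.prems(1) by (simp add: gamma_poly_Suc_Suc)
  then show ?case
    using h0 step.IH[of "\<lambda>k. h (Suc k)" "k - 1"] step.prems(2) by (cases k) auto
qed

lemma gamma_poly_unique:
  assumes "\<And>k. n div 2 < k \<Longrightarrow> f k = 0" "\<And>k. n div 2 < k \<Longrightarrow> g k = 0"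
    and "gamma_poly n f = gamma_poly n g"
  shows "f = g"
proof
  fix k
  have "gamma_poly n (\<lambda>k. f k - g k) = 0" using assms(3) by (simp add: gamma_poly_diff)
  then show "f k = g k"
    using gamma_poly_eq_0D[of n "\<lambda>k. f k - g k" k] assms(1,2) by (cases "k \<le> n div 2") auto
qed

definition gamma_decomposition :: "nat \<Rightarrow> real poly \<Rightarrow> (nat \<Rightarrow> real) \<Rightarrow> (nat \<Rightarrow> real) \<Rightarrow> bool" where
  "gamma_decomposition n p f g \<longleftrightarrow>
     (\<forall>k. n div 2 < k \<longrightarrow> f k = 0) \<and> (\<forall>k. (n - 1) div 2 < k \<longrightarrow> g k = 0) \<and>
     p = gamma_poly n f + X * gamma_poly (n - 1) g"

lemma gamma_decomposition_L:
  assumes "m \<ge> 1" "gamma_decomposition m p f g"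
  shows "gamma_decomposition (Suc m) (L m p) (alpha_next m f g) (beta_next m f g)"
  using assms L_gamma_decomposition[of m f g] alpha_next_vanishes[of m f g] beta_next_vanishes[of m f g]
  unfolding gamma_decomposition_def by auto

lemma alpha_beta_eqI:
  assumes "m \<ge> 1" "gamma_decomposition m (Q m) f g"
  shows "alpha m = f" "beta m = g"
proof -
  have f: "\<forall>k. m div 2 < k \<longrightarrow> f k = 0" and g: "\<forall>k. (m - 1) div 2 < k \<longrightarrow> g k = 0"
    and Q: "Q m = gamma_poly m f + X * gamma_poly (m - 1) g"
    using assms(2) by (simp_all add: gamma_decomposition_def)
  have "a m = gamma_poly m f" "b m = gamma_poly (m - 1) g"
    unfolding a_def b_def using symmetric_decomposition_gamma[OF assms(1) Q] by simp_all
  then show "alpha m = f" "beta m = g"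
    unfolding alpha_def beta_def gamma_basis_def[symmetric] gamma_poly_def[symmetric]
    using f g gamma_poly_unique[of m _ f] gamma_poly_unique[of "m - 1" _ g]
    by (auto intro!: the_equality)
qed

lemma gamma_decomposition_Q_Suc:
  assumes "m \<ge> 1" "gamma_decomposition m (Q m) f g"
  shows "gamma_decomposition (Suc m) (Q (Suc m)) (alpha_next m f g) (beta_next m f g)"
  unfolding Q_Suc using assms by (rule gamma_decomposition_L)

lemma gamma_decomposition_Q:
  assumes "m \<ge> 1"
  shows "gamma_decomposition m (Q m) (alpha m) (beta m)"
  using assms
proof (induction m rule: dec_induct)
  case base
  let ?f = "\<lambda>k. if k = 0 then 2 else 0" and ?g = "\<lambda>k. if k = 0 then 1 else 0"
  have "Q 1 = gamma_poly 1 ?f + X * gamma_poly 0 ?g"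
    by (intro poly_ext) (simp add: Q_closed_form Q_coeff_def gamma_poly_def gamma_basis_def)
  then have "gamma_decomposition 1 (Q 1) ?f ?g"
    by (simp add: gamma_decomposition_def)
  with alpha_beta_eqI[OF order.refl this] show ?case by simp
next
  case (step m)
  with alpha_beta_eqI[of "Suc m"] gamma_decomposition_Q_Suc[OF step.hyps(1) step.IH] show ?case by simp
qed

lemma alpha_beta_Suc:
  assumes "m \<ge> 1"
  shows "alpha (Suc m) = alpha_next m (alpha m) (beta m)" "beta (Suc m) = beta_next m (alpha m) (beta m)"
  using alpha_beta_eqI[OF _ gamma_decomposition_Q_Suc[OF assms gamma_decomposition_Q[OF assms]]] by simp_all

theorem lemma3p2:
  fixes m t :: nat
  assumes "m \<ge> 1"
  shows "(m = 2*t \<longrightarrow>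
      (\<forall>k. 1 \<le> k \<and> k \<le> t \<longrightarrow>
          alpha (m+1) k = 2 * (2 * real m + 1 - real k) * alpha m k - (4 * real k - 1) * beta m (k - 1)) \<and>
      (\<forall>k. k \<le> t - 1 \<longrightarrow>
          beta (m+1) k = (1 + 4 * real k) * alpha m k + (4 * real m + 2 * real k + 3) * beta m k) \<and>
      alpha (m+1) 0 = 2 * (2 * real m + 1) * alpha m 0 \<and>
      beta (m+1) t = (1 + 4 * real t) * alpha m t)
    \<and> (m = 2*t + 1 \<longrightarrow>
      (\<forall>k. 1 \<le> k \<and> k \<le> t \<longrightarrow>
          alpha (m+1) k = 2 * (2 * real m + 1 - real k) * alpha m k - (4 * real k - 1) * beta m (k - 1)) \<and>
      alpha (m+1) 0 = 2 * (2 * real m + 1) * alpha m 0 \<and>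
      alpha (m+1) (t+1) = - (3 + 4 * real t) * beta m t \<and>
      (\<forall>k. k \<le> t \<longrightarrow>
          beta (m+1) k = (1 + 4 * real k) * alpha m k + (4 * real m + 2 * real k + 3) * beta m k))"
proof -
  have alpha_vanishes: "\<And>k. m div 2 < k \<Longrightarrow> alpha m k = 0"
    and beta_vanishes: "\<And>k. (m - 1) div 2 < k \<Longrightarrow> beta m k = 0"
    using gamma_decomposition_Q[OF assms] by (simp_all add: gamma_decomposition_def)
  have "m = 2*t \<Longrightarrow> beta m t = 0" and "m = 2*t + 1 \<Longrightarrow> alpha m (t + 1) = 0"
    using alpha_vanishes[of "t + 1"] beta_vanishes[of t] assms by auto
  then show ?thesis
    unfolding Suc_eq_plus1[symmetric] alpha_beta_Suc[OF assms]
    by (simp add: alpha_next_def beta_next_def algebra_simps)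
qed

end
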